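(* Let $L$ be a finite index set and let $Z=(Z^{(u)})_{u\in L}$, where each $Z^{(u)}\in\mathbb{R}^{n_u}$ (entries indexed by $j$). Let $k$ be a positive integer and, for each $u\in L$, let $\alpha^{(u)}_1,\alpha^{(u)}_2,\alpha^{(u)}_3,\alpha^{(u)}_4\ge 0$ with $\alpha^{(u)}_1\le\alpha^{(u)}_2$, and let $E_{\rm budget}\in\mathbb{R}$ with $C:=E_{\rm budget}-\sum_{u\in L}\alpha^{(u)}_4\ge 0$. For each $u$, fix a set $T^{(u)}$ of $\min(k,n_u)$ indices $j$ such that every $|Z^{(u)}_j|$ with $j\in T^{(u)}$ is at least every $|Z^{(u)}_{j'}|$ with $j'\notin T^{(u)}$ (ties broken arbitrarily), and define $A=(A^{(u)})_{u\in L}$ of the same shape as $Z$ by $A^{(u)}_j=\alpha^{(u)}_1+\alpha^{(u)}_3$ if $j\in T^{(u)}$ and $A^{(u)}_j=\alpha^{(u)}_2+\alpha^{(u)}_3$ otherwise. Consider the projection problem $$\mathrm{P}_{\Omega(E_{\rm budget})}(Z):=\operatorname{argmin}_{W\in\Omega(E_{\rm budget})}\|W-Z\|^2$$ and the $0/1$ knapsack problem $$\max_{\xi\ \text{binary, same shape as } Z}\ \langle Z\odot Z,\xi\rangle\quad\text{s.t.}\quad \langle A,\xi\rangle\le C.$$ Then these problems are equivalent: $\min_{W\in\Omega(E_{\rm budget})}\|W-Z\|^2=\|Z\|^2-\max\{\langle Z\odot Z,\xi\rangle:\xi\text{ binary},\ \langle A,\xi\rangle\le C\}$, and if $\xi^*$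 is an optimal solution of the knapsack problem, then $Z\odot\xi^*\in\Omega(E_{\rm budget})$ and $Z\odot\xi^*$ is an optimal solution of the projection problem.
   Context: For $W=(W^{(u)})_{u\in L}$ with $W^{(u)}\in\mathbb{R}^{n_u}$, $\|W^{(u)}\|_0$ denotes the number of nonzero entries and $\|W\|^2=\sum_u\sum_j (W^{(u)}_j)^2$. The energy-constraint set is $$\Omega(E_{\rm budget})=\Big\{W:\ \sum_{u\in L}\Big(\alpha^{(u)}_1\min(k,\|W^{(u)}\|_0)+\alpha^{(u)}_2\max(0,\|W^{(u)}\|_0-k)+\alpha^{(u)}_3\|W^{(u)}\|_0+\alpha^{(u)}_4\Big)\le E_{\rm budget}\Big\}.$$ $\odot$ is the entrywise product, $\langle\cdot,\cdot\rangle$ the entrywise inner product, and "binary" means all entries lie in $\{0,1\}$. *)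

theory Defs
  imports Complex_Main
begin

text \<open>A family W = (W^(u))_{u in L} with W^(u) in R^{n u} is represented as a function
  W :: 'u => nat => real, where only the entries W u j with u in L and j < n u are meaningful.\<close>

definition l0 :: "('u \<Rightarrow> nat) \<Rightarrow> ('u \<Rightarrow> nat \<Rightarrow> real) \<Rightarrow> 'u \<Rightarrow> nat" where
  "l0 n W u = card {j. j < n u \<and> W u j \<noteq> 0}"

definition sqnorm :: "'u set \<Rightarrow> ('u \<Rightarrow> nat) \<Rightarrow> ('u \<Rightarrow> nat \<Rightarrow> real) \<Rightarrow> real" where
  "sqnorm L n W = (\<Sum>u\<in>L. \<Sum>j<n u. (W u j)^2)"

definition inner_fam :: "'u set \<Rightarrow> ('u \<Rightarrow> nat) \<Rightarrow> ('u \<Rightarrow> nat \<Rightarrow> real) \<Rightarrow> ('u \<Rightarrow> nat \<Rightarrow> real) \<Rightarrow> real" where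
  "inner_fam L n X Y = (\<Sum>u\<in>L. \<Sum>j<n u. X u j * Y u j)"

definition hadamard :: "('u \<Rightarrow> nat \<Rightarrow> real) \<Rightarrow> ('u \<Rightarrow> nat \<Rightarrow> real) \<Rightarrow> ('u \<Rightarrow> nat \<Rightarrow> real)" where
  "hadamard X Y = (\<lambda>u j. X u j * Y u j)"

definition binary :: "'u set \<Rightarrow> ('u \<Rightarrow> nat) \<Rightarrow> ('u \<Rightarrow> nat \<Rightarrow> real) \<Rightarrow> bool" where
  "binary L n X \<longleftrightarrow> (\<forall>u\<in>L. \<forall>j<n u. X u j \<in> {0, 1})"

definition Omega :: "'u set \<Rightarrow> ('u \<Rightarrow> nat) \<Rightarrow> nat \<Rightarrow> ('u \<Rightarrow> nat \<Rightarrow> real) \<Rightarrow> real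
    \<Rightarrow> ('u \<Rightarrow> nat \<Rightarrow> real) set" where
  "Omega L n k alpha E = {W. (\<Sum>u\<in>L. alpha u 1 * real (min k (l0 n W u))
        + alpha u 2 * max 0 (real (l0 n W u) - real k)
        + alpha u 3 * real (l0 n W u) + alpha u 4) \<le> E}"

definition Amat :: "('u \<Rightarrow> nat set) \<Rightarrow> ('u \<Rightarrow> nat \<Rightarrow> real) \<Rightarrow> ('u \<Rightarrow> nat \<Rightarrow> real)" where
  "Amat T alpha = (\<lambda>u j. if j \<in> T u then alpha u 1 + alpha u 3 else alpha u 2 + alpha u 3)"

end

theory Submission
  imports Defs
begin

text \<open>Projecting onto the energy set only ever keeps or zeroes entries of Z: given the support
  S of a feasible W, the point Z restricted to S is at least as close to Z. Inside a block u the
  energy depends only on the size s of the support, and the knapsack weights A charge the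
  cheaper price to at most min(k, n_u) indices of T. Since T collects the entries of largest
  modulus, the support can be moved so that min(k, s) of its indices lie in T without shrinking
  the retained mass; then its knapsack cost equals its energy. Conversely, the knapsack cost of
  any 0/1 choice bounds the energy of the corresponding masked point from above, because
  alpha_1 \<le> alpha_2.\<close>

definition block_energy :: "real \<Rightarrow> real \<Rightarrow> real \<Rightarrow> nat \<Rightarrow> nat \<Rightarrow> real" where
  "block_energy a1 a2 a3 k s = a1 * real (min k s) + a2 * max 0 (real s - real k) + a3 * real s"

lemma Omega_iff_block_energy:
  "W \<in> Omega L n k alpha E \<longleftrightarrow>
     (\<Sum>u\<in>L. block_energy (alpha u 1) (alpha u 2) (alpha u 3) k (l0 n W u))
       \<le> E - (\<Sum>u\<in>L. alpha u 4)"
  unfolding Omega_def block_energy_def by (simp add: sum.distrib algebra_simps)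

lemma block_energy_mono:
  assumes "0 \<le> a1" "0 \<le> a2" "0 \<le> a3" "s \<le> m"
  shows "block_energy a1 a2 a3 k s \<le> block_energy a1 a2 a3 k m"
  unfolding block_energy_def
  using assms by (intro add_mono mult_left_mono) auto

lemma block_energy_eq_split_cost:
  "block_energy a1 a2 a3 k m
     = (a1 + a3) * real (min k m) + (a2 + a3) * (real m - real (min k m))"
  unfolding block_energy_def by (simp add: min_def max_def algebra_simps)

lemma block_energy_le_split_cost:
  assumes "a1 \<le> a2" "p \<le> k" "p \<le> m"
  shows "block_energy a1 a2 a3 k m \<le> (a1 + a3) * real p + (a2 + a3) * (real m - real p)"
proof -
  have "p \<le> min k m" using assms by simp
  then have "0 \<le> (a2 - a1) * (real (min k m) - real p)"
    using assms by (intro mult_nonneg_nonneg) auto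
  then show ?thesis unfolding block_energy_eq_split_cost by (simp add: algebra_simps)
qed

lemma sum_two_valued:
  fixes a b :: real
  assumes "finite P"
  shows "(\<Sum>j\<in>P. if j \<in> T then a else b)
           = a * real (card (P \<inter> T)) + b * (real (card P) - real (card (P \<inter> T)))"
proof -
  have "card (P - T) = card P - card (P \<inter> T)"
    by (metis Int_commute assms card_Diff_subset_Int finite_Int)
  moreover have "card (P \<inter> T) \<le> card P" using assms by (simp add: card_mono)
  ultimately show ?thesis
    using sum.Int_Diff[OF assms, of "\<lambda>j. if j \<in> T then a else b" T] by (simp add: of_nat_diff)
qed

lemma sum_le_sum_if_dominated:
  fixes g :: "'a \<Rightarrow> real"
  assumes "finite X" and "card Y = card X" and dom: "\<forall>x\<in>X. \<forall>y\<in>Y. g y \<le> g x"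
  shows "sum g Y \<le> sum g X"
proof (cases "X = {}")
  case True
  then have "card Y = 0" using assms by simp
  then show ?thesis using True by (cases "finite Y") auto
next
  case False
  define m where "m = Min (g ` X)"
  have "m \<in> g ` X" unfolding m_def using False \<open>finite X\<close> by simp
  then have "\<forall>y\<in>Y. g y \<le> m" using dom by blast
  then have "sum g Y \<le> real (card Y) * m" by (intro sum_bounded_above) auto
  also have "\<dots> \<le> sum g X"
    using sum_bounded_below[of X m g] assms unfolding m_def by simp
  finally show ?thesis .
qed

text \<open>Trade min(|S|, |T|) - |S \<inter> T| elements of S outside T for as many elements of T;
  each trade replaces a value of g outside T by a value inside T.\<close>
lemma exists_subset_meeting_top:
  fixes g :: "'a \<Rightarrow> real"
  assumes "finite U" "T \<subseteq> U" "S \<subseteq> U"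
    and top: "\<forall>j\<in>T. \<forall>j'\<in>U - T. g j' \<le> g j"
  shows "\<exists>S'\<subseteq>U. card (S' \<inter> T) = min (card S) (card T) \<and> card S' = card S
           \<and> sum g S \<le> sum g S'"
proof -
  have fin: "finite S" "finite T" using assms finite_subset by blast+
  define a where "a = card (S \<inter> T)"
  define q where "q = min (card S) (card T)"
  have cardS: "card S = a + card (S - T)"
    unfolding a_def using fin by (metis Int_Diff_disjoint Int_Diff_Un card_Un_disjoint finite_Diff finite_Int)
  have cardT: "card T = a + card (T - S)"
    unfolding a_def using fin by (metis Int_commute Int_Diff_disjoint Int_Diff_Un card_Un_disjoint finite_Diff finite_Int)
  have "a \<le> q" unfolding q_def using cardS cardT by simp
  obtain R where R: "R \<subseteq> T - S" "card R = q - a"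
    using obtain_subset_with_card_n[of "q - a" "T - S"] cardT q_def by force
  obtain D where D: "D \<subseteq> S - T" "card D = q - a"
    using obtain_subset_with_card_n[of "q - a" "S - T"] cardS q_def by force
  have finRD: "finite R" "finite D" using R D fin finite_subset by blast+
  define S' where "S' = (S - D) \<union> R"
  have "S' \<inter> T = (S \<inter> T) \<union> R" unfolding S'_def using R D by blast
  moreover have "card ((S \<inter> T) \<union> R) = a + card R"
    unfolding a_def using R fin finRD by (intro card_Un_disjoint) auto
  ultimately have "card (S' \<inter> T) = q" using R \<open>a \<le> q\<close> by simp
  moreover have "card S' = card S"
  proof -
    have "card S' = card (S - D) + card R"
      unfolding S'_def using R fin finRD by (intro card_Un_disjoint) auto
    moreover have "card (S - D) = card S - card D"
      using D finRD by (intro card_Diff_subset) auto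
    moreover have "card D \<le> card S" using D fin by (intro card_mono) auto
    ultimately show ?thesis using R D by simp
  qed
  moreover have "sum g S \<le> sum g S'"
  proof -
    have "\<forall>x\<in>R. \<forall>y\<in>D. g y \<le> g x" using R D top \<open>S \<subseteq> U\<close> by blast
    then have "sum g D \<le> sum g R"
      using R D finRD by (intro sum_le_sum_if_dominated) auto
    moreover have "sum g S = sum g (S - D) + sum g D"
      using D fin by (intro sum.subset_diff) auto
    moreover have "sum g S' = sum g (S - D) + sum g R"
      unfolding S'_def using R fin finRD by (intro sum.union_disjoint) auto
    ultimately show ?thesis by simp
  qed
  moreover have "S' \<subseteq> U" unfolding S'_def using assms R by blast
  ultimately show ?thesis unfolding q_def by blast
qed

lemma inner_fam_binary:
  assumes "binary L n \<xi>"
  shows "inner_fam L n X \<xi> = (\<Sum>u\<in>L. sum (X u) {j. j < n u \<and> \<xi> u j = 1})"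
  unfolding inner_fam_def
proof (rule sum.cong)
  fix u assume "u \<in> L"
  then have "(\<Sum>j<n u. X u j * \<xi> u j) = (\<Sum>j<n u. if \<xi> u j = 1 then X u j else 0)"
    using assms unfolding binary_def by (intro sum.cong) auto
  also have "\<dots> = sum (X u) {j \<in> {..<n u}. \<xi> u j = 1}"
    by (rule sum.inter_filter[symmetric]) simp
  also have "{j \<in> {..<n u}. \<xi> u j = 1} = {j. j < n u \<and> \<xi> u j = 1}" by auto
  finally show "(\<Sum>j<n u. X u j * \<xi> u j) = sum (X u) {j. j < n u \<and> \<xi> u j = 1}" .
qed simp

lemma binary_indicator: "binary L n (\<lambda>u j. if j \<in> S u then 1 else 0)"
  unfolding binary_def by simp

lemma inner_fam_indicator:
  assumes "\<forall>u\<in>L. S u \<subseteq> {..<n u}"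
  shows "inner_fam L n X (\<lambda>u j. if j \<in> S u then 1 else 0) = (\<Sum>u\<in>L. sum (X u) (S u))"
  unfolding inner_fam_binary[OF binary_indicator]
  using assms by (intro sum.cong refl arg_cong[where f="sum _"]) auto

lemma finite_inner_fam_binary:
  assumes "finite L"
  shows "finite (inner_fam L n X ` Collect (binary L n))"
proof -
  define val where "val Q = (\<Sum>u\<in>L. sum (X u) {j. (u, j) \<in> Q})" for Q
  have "inner_fam L n X ` Collect (binary L n) \<subseteq> val ` Pow (Sigma L (\<lambda>u. {..<n u}))"
  proof
    fix y assume "y \<in> inner_fam L n X ` Collect (binary L n)"
    then obtain \<xi> where \<xi>: "binary L n \<xi>" and y: "y = inner_fam L n X \<xi>" by auto
    define Q where "Q = {(u, j). u \<in> L \<and> j < n u \<and> \<xi> u j = 1}"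
    have "y = val Q"
      unfolding y inner_fam_binary[OF \<xi>] val_def Q_def by (intro sum.cong) auto
    moreover have "Q \<in> Pow (Sigma L (\<lambda>u. {..<n u}))" unfolding Q_def by auto
    ultimately show "y \<in> val ` Pow (Sigma L (\<lambda>u. {..<n u}))" by blast
  qed
  moreover have "finite (Sigma L (\<lambda>u. {..<n u}))" using assms by simp
  ultimately show ?thesis by (meson finite_Pow_iff finite_imageI finite_subset)
qed

lemma sqnorm_hadamard_binary:
  assumes "binary L n \<xi>"
  shows "sqnorm L n (\<lambda>u j. hadamard Z \<xi> u j - Z u j) = sqnorm L n Z - inner_fam L n (hadamard Z Z) \<xi>"
proof -
  have "(z * x - z)^2 = z^2 - z * z * x" if "x \<in> {0, 1}" for z x :: real
    using that by (auto simp: power2_eq_square)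
  then have "\<forall>u\<in>L. \<forall>j<n u. (Z u j * \<xi> u j - Z u j)^2 = (Z u j)^2 - Z u j * Z u j * \<xi> u j"
    using assms unfolding binary_def by blast
  then show ?thesis
    unfolding sqnorm_def inner_fam_def hadamard_def
    by (simp add: sum_subtractf[symmetric])
qed

lemma sqnorm_diff_ge_off_support:
  "sqnorm L n Z - (\<Sum>u\<in>L. sum (hadamard Z Z u) {j. j < n u \<and> W u j \<noteq> 0})
     \<le> sqnorm L n (\<lambda>u j. W u j - Z u j)"
proof -
  have "(\<Sum>j<n u. (Z u j)^2) - sum (hadamard Z Z u) {j. j < n u \<and> W u j \<noteq> 0}
          \<le> (\<Sum>j<n u. (W u j - Z u j)^2)" for u
  proof -
    define S where "S = {j. j < n u \<and> W u j \<noteq> 0}"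
    have "S \<subseteq> {..<n u}" unfolding S_def by auto
    then have "(\<Sum>j<n u. (Z u j)^2) - sum (hadamard Z Z u) S = (\<Sum>j\<in>{..<n u} - S. (Z u j)^2)"
      using sum.subset_diff[of S "{..<n u}" "\<lambda>j. (Z u j)^2"]
      by (simp add: hadamard_def power2_eq_square)
    also have "\<dots> = (\<Sum>j\<in>{..<n u} - S. (W u j - Z u j)^2)"
      unfolding S_def by (intro sum.cong) auto
    also have "\<dots> \<le> (\<Sum>j<n u. (W u j - Z u j)^2)"
      by (intro sum_mono2) auto
    finally show ?thesis unfolding S_def .
  qed
  then show ?thesis
    unfolding sqnorm_def by (simp add: sum_subtractf[symmetric] sum_mono)
qed

lemma Amat_sum_eq_split_cost:
  assumes "finite P"
  shows "sum (Amat T alpha u) P = (alpha u 1 + alpha u 3) * real (card (P \<inter> T u))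
           + (alpha u 2 + alpha u 3) * (real (card P) - real (card (P \<inter> T u)))"
  unfolding Amat_def using sum_two_valued[OF assms] by simp

lemma hadamard_binary_in_Omega:
  assumes alpha: "\<forall>u\<in>L. 0 \<le> alpha u 1 \<and> alpha u 1 \<le> alpha u 2 \<and> 0 \<le> alpha u 3"
    and T: "\<forall>u\<in>L. T u \<subseteq> {..<n u} \<and> card (T u) \<le> k"
    and \<xi>: "binary L n \<xi>" and cost: "inner_fam L n (Amat T alpha) \<xi> \<le> E - (\<Sum>u\<in>L. alpha u 4)"
  shows "hadamard Z \<xi> \<in> Omega L n k alpha E"
proof -
  have "block_energy (alpha u 1) (alpha u 2) (alpha u 3) k (l0 n (hadamard Z \<xi>) u)
          \<le> sum (Amat T alpha u) {j. j < n u \<and> \<xi> u j = 1}" if u: "u \<in> L" for u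
  proof -
    define P where "P = {j. j < n u \<and> \<xi> u j = 1}"
    have "finite P" unfolding P_def by simp
    have "l0 n (hadamard Z \<xi>) u \<le> card P"
      unfolding l0_def hadamard_def P_def using \<xi> u unfolding binary_def
      by (intro card_mono) auto
    then have "block_energy (alpha u 1) (alpha u 2) (alpha u 3) k (l0 n (hadamard Z \<xi>) u)
        \<le> block_energy (alpha u 1) (alpha u 2) (alpha u 3) k (card P)"
      using alpha u by (intro block_energy_mono) auto
    also have "\<dots> \<le> sum (Amat T alpha u) P"
    proof -
      have "card (P \<inter> T u) \<le> card (T u)"
        using T u by (intro card_mono) (auto intro: finite_subset)
      then show ?thesis
        unfolding Amat_sum_eq_split_cost[OF \<open>finite P\<close>]
        using alpha T u \<open>finite P\<close> by (intro block_energy_le_split_cost) (auto simp: card_mono)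
    qed
    finally show ?thesis unfolding P_def .
  qed
  then have "(\<Sum>u\<in>L. block_energy (alpha u 1) (alpha u 2) (alpha u 3) k (l0 n (hadamard Z \<xi>) u))
      \<le> inner_fam L n (Amat T alpha) \<xi>"
    unfolding inner_fam_binary[OF \<xi>] by (rule sum_mono)
  then show ?thesis unfolding Omega_iff_block_energy using cost by linarith
qed

lemma exists_support_meeting_top_entries:
  fixes z :: "nat \<Rightarrow> real"
  assumes T: "T \<subseteq> {..<N}" "card T = min k N"
    and top: "\<forall>j\<in>T. \<forall>j'\<in>{..<N} - T. \<bar>z j'\<bar> \<le> \<bar>z j\<bar>"
    and S: "S \<subseteq> {..<N}"
  shows "\<exists>S'\<subseteq>{..<N}. card (S' \<inter> T) = min k (card S) \<and> card S' = card S
           \<and> (\<Sum>j\<in>S. z j * z j) \<le> (\<Sum>j\<in>S'. z j * z j)"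
proof -
  have "\<forall>j\<in>T. \<forall>j'\<in>{..<N} - T. z j' * z j' \<le> z j * z j"
    using top by (auto simp: abs_le_square_iff power2_eq_square)
  moreover have "card S \<le> N" using card_mono[OF _ S] by simp
  then have q: "min (card S) (card T) = min k (card S)" using T by simp
  ultimately show ?thesis
    using exists_subset_meeting_top[of "{..<N}" T S "\<lambda>j. z j * z j"] T S unfolding q by blast
qed

lemma Omega_dominated_by_knapsack:
  assumes T: "\<forall>u\<in>L. T u \<subseteq> {..<n u} \<and> card (T u) = min k (n u)"
    and top: "\<forall>u\<in>L. \<forall>j\<in>T u. \<forall>j'\<in>{..<n u} - T u. \<bar>Z u j'\<bar> \<le> \<bar>Z u j\<bar>"
    and W: "W \<in> Omega L n k alpha E"
  shows "\<exists>\<xi>. binary L n \<xi> \<and> inner_fam L n (Amat T alpha) \<xi> \<le> E - (\<Sum>u\<in>L. alpha u 4)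
           \<and> sqnorm L n Z - inner_fam L n (hadamard Z Z) \<xi> \<le> sqnorm L n (\<lambda>u j. W u j - Z u j)"
proof -
  let ?supp = "\<lambda>u. {j. j < n u \<and> W u j \<noteq> 0}"
  have "\<forall>u\<in>L. \<exists>S. S \<subseteq> {..<n u} \<and> card (S \<inter> T u) = min k (l0 n W u) \<and> card S = l0 n W u
          \<and> sum (hadamard Z Z u) (?supp u) \<le> sum (hadamard Z Z u) S"
  proof
    fix u assume u: "u \<in> L"
    show "\<exists>S. S \<subseteq> {..<n u} \<and> card (S \<inter> T u) = min k (l0 n W u) \<and> card S = l0 n W u
          \<and> sum (hadamard Z Z u) (?supp u) \<le> sum (hadamard Z Z u) S"
      using exists_support_meeting_top_entries[of "T u" "n u" k "Z u" "?supp u"] T top u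
      unfolding l0_def hadamard_def by blast
  qed
  then have "\<exists>S. \<forall>u\<in>L. S u \<subseteq> {..<n u} \<and> card (S u \<inter> T u) = min k (l0 n W u)
      \<and> card (S u) = l0 n W u \<and> sum (hadamard Z Z u) (?supp u) \<le> sum (hadamard Z Z u) (S u)"
    by (rule bchoice)
  then obtain S where S: "\<forall>u\<in>L. S u \<subseteq> {..<n u} \<and> card (S u \<inter> T u) = min k (l0 n W u)
      \<and> card (S u) = l0 n W u \<and> sum (hadamard Z Z u) (?supp u) \<le> sum (hadamard Z Z u) (S u)"
    by blast
  have S_sub: "\<forall>u\<in>L. S u \<subseteq> {..<n u}" using S by blast
  define \<xi> where "\<xi> = (\<lambda>u j. if j \<in> S u then 1 else (0::real))"
  have "inner_fam L n (Amat T alpha) \<xi>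
          = (\<Sum>u\<in>L. block_energy (alpha u 1) (alpha u 2) (alpha u 3) k (l0 n W u))"
    unfolding \<xi>_def inner_fam_indicator[OF S_sub]
  proof (rule sum.cong)
    fix u assume u: "u \<in> L"
    then have "finite (S u)" using S_sub finite_subset by blast
    then show "sum (Amat T alpha u) (S u)
        = block_energy (alpha u 1) (alpha u 2) (alpha u 3) k (l0 n W u)"
      using S u by (simp add: Amat_sum_eq_split_cost block_energy_eq_split_cost)
  qed simp
  then have "inner_fam L n (Amat T alpha) \<xi> \<le> E - (\<Sum>u\<in>L. alpha u 4)"
    using W unfolding Omega_iff_block_energy by simp
  moreover have "(\<Sum>u\<in>L. sum (hadamard Z Z u) (?supp u)) \<le> inner_fam L n (hadamard Z Z) \<xi>"
    unfolding \<xi>_def inner_fam_indicator[OF S_sub] using S by (intro sum_mono) blast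
  moreover have "binary L n \<xi>" unfolding \<xi>_def by (rule binary_indicator)
  ultimately show ?thesis
    using sqnorm_diff_ge_off_support[of L n Z W] by fastforce
qed

lemma min_eq_via_max:
  fixes f :: "'a \<Rightarrow> real" and g :: "'b \<Rightarrow> real"
  assumes fin: "finite (g ` F)" and ne: "F \<noteq> {}"
    and embed: "\<forall>\<xi>\<in>F. h \<xi> \<in> \<Omega> \<and> f (h \<xi>) = c - g \<xi>"
    and dominate: "\<forall>W\<in>\<Omega>. \<exists>\<xi>\<in>F. c - g \<xi> \<le> f W"
  shows "(\<exists>W\<in>\<Omega>. f W = c - Max (g ` F)) \<and> (\<forall>W\<in>\<Omega>. c - Max (g ` F) \<le> f W)
    \<and> (\<forall>\<xi>s\<in>F. (\<forall>\<xi>\<in>F. g \<xi> \<le> g \<xi>s) \<longrightarrow> h \<xi>s \<in> \<Omega> \<and> (\<forall>W\<in>\<Omega>. f (h \<xi>s) \<le> f W))"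
proof -
  have le_Max: "g \<xi> \<le> Max (g ` F)" if "\<xi> \<in> F" for \<xi> using fin that by simp
  have "Max (g ` F) \<in> g ` F" using Max_in[OF fin] ne by blast
  then obtain \<xi>0 where "\<xi>0 \<in> F" "g \<xi>0 = Max (g ` F)" by auto
  moreover have "\<forall>W\<in>\<Omega>. c - Max (g ` F) \<le> f W"
    using dominate le_Max by fastforce
  moreover have "g \<xi>s = Max (g ` F)" if "\<xi>s \<in> F" "\<forall>\<xi>\<in>F. g \<xi> \<le> g \<xi>s" for \<xi>s
    using that le_Max \<open>\<xi>0 \<in> F\<close> \<open>g \<xi>0 = Max (g ` F)\<close> by (metis order_antisym)
  ultimately show ?thesis using embed by metis
qed

theorem theorem1:
  fixes L :: "'u set" and n :: "'u \<Rightarrow> nat" and Z :: "'u \<Rightarrow> nat \<Rightarrow> real"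
    and k :: nat and alpha :: "'u \<Rightarrow> nat \<Rightarrow> real" and E :: real
    and T :: "'u \<Rightarrow> nat set"
  assumes finL: "finite L"
    and kpos: "k > 0"
    and alpha_nonneg: "\<forall>u\<in>L. \<forall>i\<in>{1,2,3,4}. alpha u i \<ge> 0"
    and alpha12: "\<forall>u\<in>L. alpha u 1 \<le> alpha u 2"
    and Cnonneg: "E - (\<Sum>u\<in>L. alpha u 4) \<ge> 0"
    and T_sub: "\<forall>u\<in>L. T u \<subseteq> {..<n u}"
    and T_card: "\<forall>u\<in>L. card (T u) = min k (n u)"
    and T_top: "\<forall>u\<in>L. \<forall>j\<in>T u. \<forall>j'\<in>{..<n u} - T u. \<bar>Z u j'\<bar> \<le> \<bar>Z u j\<bar>"
  shows
    "(let C = E - (\<Sum>u\<in>L. alpha u 4);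
          feas = {\<xi>. binary L n \<xi> \<and> inner_fam L n (Amat T alpha) \<xi> \<le> C};
          obj = (\<lambda>\<xi>. inner_fam L n (hadamard Z Z) \<xi>);
          M = sqnorm L n Z - Max (obj ` feas)
      in (\<exists>W\<in>Omega L n k alpha E. sqnorm L n (\<lambda>u j. W u j - Z u j) = M)
       \<and> (\<forall>W\<in>Omega L n k alpha E. M \<le> sqnorm L n (\<lambda>u j. W u j - Z u j))
       \<and> (\<forall>\<xi>s\<in>feas. (\<forall>\<xi>\<in>feas. obj \<xi> \<le> obj \<xi>s) \<longrightarrow>
            hadamard Z \<xi>s \<in> Omega L n k alpha E
          \<and> (\<forall>W\<in>Omega L n k alpha E.
                sqnorm L n (\<lambda>u j. hadamard Z \<xi>s u j - Z u j) \<le> sqnorm L n (\<lambda>u j. W u j - Z u j))))"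
proof -
  define feas where "feas = {\<xi>. binary L n \<xi> \<and> inner_fam L n (Amat T alpha) \<xi> \<le> E - (\<Sum>u\<in>L. alpha u 4)}"
  have "finite (inner_fam L n (hadamard Z Z) ` feas)"
    using finite_inner_fam_binary[OF finL] unfolding feas_def
    by (rule finite_subset[rotated]) auto
  moreover have "(\<lambda>u j. 0) \<in> feas"
    using Cnonneg unfolding feas_def binary_def inner_fam_def by simp
  moreover have "\<forall>\<xi>\<in>feas. hadamard Z \<xi> \<in> Omega L n k alpha E \<and>
      sqnorm L n (\<lambda>u j. hadamard Z \<xi> u j - Z u j) = sqnorm L n Z - inner_fam L n (hadamard Z Z) \<xi>"
    using hadamard_binary_in_Omega[of L alpha T n k] sqnorm_hadamard_binary[of L n]
      alpha_nonneg alpha12 T_sub T_card unfolding feas_def by auto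
  moreover have "\<forall>W\<in>Omega L n k alpha E. \<exists>\<xi>\<in>feas.
      sqnorm L n Z - inner_fam L n (hadamard Z Z) \<xi> \<le> sqnorm L n (\<lambda>u j. W u j - Z u j)"
    using Omega_dominated_by_knapsack[of L T n k Z] T_sub T_card T_top unfolding feas_def by blast
  ultimately show ?thesis
    unfolding Let_def feas_def[symmetric] by (intro min_eq_via_max) auto
qed

end
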